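(* Let $X\subseteq\mathbb{FT}^n$ be a projective $n$-polytope and let $\phi:X\to X$ be an $\mathbb{FT}$-module automorphism. Then (i) $\phi$ extends to an $\mathbb{FT}$-module automorphism of $\mathbb{FT}^n$; and (ii) $\phi$ is the restriction to $X$ of a classical affine linear map $\mathbb{R}^n\to\mathbb{R}^n$.
   Context: $\mathbb{FT}$ is $\mathbb{R}$ with $a\oplus b=\max(a,b)$, $a\otimes b=a+b$. $\mathbb{FT}^n$ is an $\mathbb{FT}$-module under componentwise maximum and scaling $(\lambda\otimes x)_i=\lambda+x_i$; module morphisms preserve $\oplus$ and scaling. A tropical polytope is a finitely generated submodule of $\mathbb{FT}^n$. A module $P$ is projective if for every surjective morphism $\pi:N\to M$ and every morphism $g:P\to M$ there exists a morphism $h:P\to N$ with $\pi\circ h=g$. A projective $n$-polytope in $\mathbb{FT}^n$ is a tropical polytope in $\mathbb{FT}^n$ that is projective as an $\mathbb{FT}$-module and whose generator dimension (minimal cardinality of a generating set) is $n$ (for projective polytopes this equals the topological dimension, which is pure, and the dual dimension). *)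

theory Defs
  imports "HOL-Analysis.Analysis"
begin

text \<open>FT^n is modelled as real^'n, with tropical addition = componentwise max
and scalar action (lambda \<otimes> x)_i = lambda + x_i.\<close>

definition tadd :: "real^'n \<Rightarrow> real^'n \<Rightarrow> real^'n" where
  "tadd x y = (\<chi> i. max (x$i) (y$i))"

definition tscale :: "real \<Rightarrow> real^'n \<Rightarrow> real^'n" where
  "tscale l x = (\<chi> i. l + x$i)"

definition ft_module :: "'a set \<Rightarrow> ('a \<Rightarrow> 'a \<Rightarrow> 'a) \<Rightarrow> (real \<Rightarrow> 'a \<Rightarrow> 'a) \<Rightarrow> bool" where
  "ft_module A add sc \<longleftrightarrow>
     (\<forall>x\<in>A. \<forall>y\<in>A. add x y \<in> A) \<and>
     (\<forall>l. \<forall>x\<in>A. sc l x \<in> A) \<and>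
     (\<forall>x\<in>A. \<forall>y\<in>A. \<forall>z\<in>A. add (add x y) z = add x (add y z)) \<and>
     (\<forall>x\<in>A. \<forall>y\<in>A. add x y = add y x) \<and>
     (\<forall>x\<in>A. add x x = x) \<and>
     (\<forall>x\<in>A. sc 0 x = x) \<and>
     (\<forall>l m. \<forall>x\<in>A. sc l (sc m x) = sc (l + m) x) \<and>
     (\<forall>l. \<forall>x\<in>A. \<forall>y\<in>A. sc l (add x y) = add (sc l x) (sc l y)) \<and>
     (\<forall>l m. \<forall>x\<in>A. sc (max l m) x = add (sc l x) (sc m x))"

definition ft_hom :: "'a set \<Rightarrow> ('a \<Rightarrow> 'a \<Rightarrow> 'a) \<Rightarrow> (real \<Rightarrow> 'a \<Rightarrow> 'a) \<Rightarrow>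
                      'b set \<Rightarrow> ('b \<Rightarrow> 'b \<Rightarrow> 'b) \<Rightarrow> (real \<Rightarrow> 'b \<Rightarrow> 'b) \<Rightarrow> ('a \<Rightarrow> 'b) \<Rightarrow> bool" where
  "ft_hom A addA scA B addB scB f \<longleftrightarrow>
     f ` A \<subseteq> B \<and>
     (\<forall>x\<in>A. \<forall>y\<in>A. f (addA x y) = addB (f x) (f y)) \<and>
     (\<forall>l. \<forall>x\<in>A. f (scA l x) = scB l (f x))"

text \<open>Submodule of FT^n generated by a set G: all finite tropical linear
combinations (nonempty, since FT has no neutral element for max).\<close>

definition tspan :: "(real^'n) set \<Rightarrow> (real^'n) set" where
  "tspan G = {x. \<exists>F c. finite F \<and> F \<noteq> {} \<and> F \<subseteq> G \<and>
                        x = (\<chi> i. Max ((\<lambda>g. c g + g$i) ` F))}"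

definition tropical_polytope :: "(real^'n) set \<Rightarrow> bool" where
  "tropical_polytope X \<longleftrightarrow> (\<exists>G. finite G \<and> tspan G = X)"

definition generator_dimension :: "(real^'n) set \<Rightarrow> nat" where
  "generator_dimension X = (LEAST k. \<exists>G. finite G \<and> card G = k \<and> tspan G = X)"

definition projective_over :: "'b itself \<Rightarrow> (real^'n) set \<Rightarrow> bool" where
  "projective_over (t :: 'b itself) X \<longleftrightarrow>
     (\<forall>(N :: 'b set) addN scN (M :: 'b set) addM scM \<pi> g.
        ft_module N addN scN \<longrightarrow> ft_module M addM scM \<longrightarrow>
        ft_hom N addN scN M addM scM \<pi> \<longrightarrow> \<pi> ` N = M \<longrightarrow>
        ft_hom X tadd tscale M addM scM g \<longrightarrow>
        (\<exists>h. ft_hom X tadd tscale N addN scN h \<and> (\<forall>x\<in>X. \<pi> (h x) = g x)))"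

text \<open>Test modules are taken with carriers in the (large) type real set set
(cardinality 2^(2^continuum)).\<close>

definition ft_projective :: "(real^'n) set \<Rightarrow> bool" where
  "ft_projective X \<longleftrightarrow> projective_over TYPE(real set set) X"

definition projective_polytope :: "(real^'n) set \<Rightarrow> bool" where
  "projective_polytope X \<longleftrightarrow>
     tropical_polytope X \<and> ft_projective X \<and> generator_dimension X = CARD('n)"

definition ft_automorphism :: "(real^'n) set \<Rightarrow> (real^'n \<Rightarrow> real^'n) \<Rightarrow> bool" where
  "ft_automorphism X f \<longleftrightarrow> ft_hom X tadd tscale X tadd tscale f \<and> bij_betw f X X"

end

theory Submission
  imports Defs "HOL-Library.Countable"
begin

text \<open>Let g_1, ..., g_n generate X. By projectivity, the generator map
  c \<mapsto> max_j (c_j + g_j) from FT^n onto X has a module section s. Minimality of the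
  generating family forces s(g_i)_i = 0 and, for every i, a tight coordinate k(i) with
  x_k(i) = (g_i)_k(i) + s(x)_i for all x \<in> X; moreover k is a permutation. So the coordinates
  of X are, up to translation, those of the section, and they are join-irreducible among the
  linear functionals on X: a coordinate that is a maximum of functionals equals one of them.
  An automorphism \<phi> turns a coordinate into a maximum of translated coordinates, hence into
  a single one: \<phi>(x)_a = \<mu>_a + x_\<tau>(a) with \<tau> a permutation. This formula defines an
  automorphism of FT^n and an affine map with a permutation matrix.\<close>

lemma tadd_nth [simp]: "tadd x y $ i = max (x$i) (y$i)"
  by (simp add: tadd_def)

lemma tscale_nth [simp]: "tscale l x $ i = l + x$i"
  by (simp add: tscale_def)

lemma Max_merge_Un:
  fixes f f' :: "'a \<Rightarrow> 'b::linorder"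
  assumes F: "finite F" "F \<noteq> {}" and F': "finite F'" "F' \<noteq> {}"
  defines "m v \<equiv> if v \<in> F then if v \<in> F' then max (f v) (f' v) else f v else f' v"
  shows "Max (m ` (F \<union> F')) = max (Max (f ` F)) (Max (f' ` F'))"
proof (rule antisym)
  have "f v \<le> Max (f ` F)" if "v \<in> F" for v
    using F that by simp
  moreover have "f' v \<le> Max (f' ` F')" if "v \<in> F'" for v
    using F' that by simp
  ultimately have "m v \<le> max (Max (f ` F)) (Max (f' ` F'))" if "v \<in> F \<union> F'" for v
    using that unfolding m_def by (auto intro: max.mono max.coboundedI1 max.coboundedI2)
  then show "Max (m ` (F \<union> F')) \<le> max (Max (f ` F)) (Max (f' ` F'))"
    using F F' by (intro Max.boundedI) auto
  have "f v \<le> Max (m ` (F \<union> F'))" if "v \<in> F" for v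
    using F F' that by (intro order_trans[OF _ Max_ge[of _ "m v"]]) (auto simp: m_def)
  moreover have "f' v \<le> Max (m ` (F \<union> F'))" if "v \<in> F'" for v
    using F F' that by (intro order_trans[OF _ Max_ge[of _ "m v"]]) (auto simp: m_def)
  ultimately show "max (Max (f ` F)) (Max (f' ` F')) \<le> Max (m ` (F \<union> F'))"
    using F F' by (auto intro!: Max.boundedI)
qed

lemma Max_max_image:
  fixes f h :: "'a \<Rightarrow> 'b::linorder"
  assumes "finite A" "A \<noteq> {}"
  shows "Max ((\<lambda>j. max (f j) (h j)) ` A) = max (Max (f ` A)) (Max (h ` A))"
  using assms by (induction A rule: finite_ne_induct) (simp_all add: max.assoc max.left_commute)

subsection \<open>Tropical linear spans\<close>

lemma tspan_mono: "A \<subseteq> B \<Longrightarrow> tspan A \<subseteq> tspan B"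
  unfolding tspan_def by blast

lemma tspan_superset: "v \<in> G \<Longrightarrow> v \<in> tspan G"
  unfolding tspan_def by (intro CollectI exI[of _ "{v}"] exI[of _ "\<lambda>_. 0"]) (simp add: vec_eq_iff)

lemma tspan_tscale:
  assumes "x \<in> tspan G"
  shows "tscale l x \<in> tspan G"
proof -
  obtain F c where F: "finite F" "F \<noteq> {}" "F \<subseteq> G" and x: "x = (\<chi> i. Max ((\<lambda>v. c v + v$i) ` F))"
    using assms unfolding tspan_def by blast
  have "l + x$i = Max ((\<lambda>v. (l + c v) + v$i) ` F)" for i
    using Max_add_commute[OF F(1,2), of "\<lambda>v. c v + v$i" l] by (simp add: x add_ac)
  then have "tscale l x = (\<chi> i. Max ((\<lambda>v. (l + c v) + v$i) ` F))"
    by (simp add: vec_eq_iff)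
  then show ?thesis
    using F unfolding tspan_def by (intro CollectI exI[of _ F] exI[of _ "\<lambda>v. l + c v"]) simp
qed

lemma tspan_tadd:
  assumes "x \<in> tspan G" "y \<in> tspan G"
  shows "tadd x y \<in> tspan G"
proof -
  obtain F c where F: "finite F" "F \<noteq> {}" "F \<subseteq> G" and x: "x = (\<chi> i. Max ((\<lambda>v. c v + v$i) ` F))"
    using assms(1) unfolding tspan_def by blast
  obtain F' c' where F': "finite F'" "F' \<noteq> {}" "F' \<subseteq> G" and y: "y = (\<chi> i. Max ((\<lambda>v. c' v + v$i) ` F'))"
    using assms(2) unfolding tspan_def by blast
  define d where "d v = (if v \<in> F then if v \<in> F' then max (c v) (c' v) else c v else c' v)" for v
  have "Max ((\<lambda>v. d v + v$i) ` (F \<union> F')) =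
        max (Max ((\<lambda>v. c v + v$i) ` F)) (Max ((\<lambda>v. c' v + v$i) ` F'))" for i
    using Max_merge_Un[OF F(1,2) F'(1,2), of "\<lambda>v. c v + v$i" "\<lambda>v. c' v + v$i"]
    unfolding d_def by (simp add: if_distrib[of "\<lambda>a. a + _"] max_add_distrib_left)
  then have "tadd x y = (\<chi> i. Max ((\<lambda>v. d v + v$i) ` (F \<union> F')))"
    by (simp add: x y vec_eq_iff)
  then show ?thesis
    using F F' unfolding tspan_def by (intro CollectI exI[of _ "F \<union> F'"] exI[of _ d]) simp
qed

definition tcomb :: "('i::finite \<Rightarrow> real^'n) \<Rightarrow> 'i set \<Rightarrow> real^'i \<Rightarrow> real^'n" where
  "tcomb g J c = (\<chi> k. Max ((\<lambda>j. c$j + g j $ k) ` J))"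

lemma tcomb_nth: "tcomb g J c $ k = Max ((\<lambda>j. c$j + g j $ k) ` J)"
  by (simp add: tcomb_def)

lemma tcomb_ge: "j \<in> J \<Longrightarrow> c$j + g j $ k \<le> tcomb g J c $ k"
  by (simp add: tcomb_nth)

lemma tcomb_singleton: "tcomb g {j} c = tscale (c$j) (g j)"
  by (simp add: vec_eq_iff tcomb_nth)

lemma tcomb_insert:
  "J \<noteq> {} \<Longrightarrow> tcomb g (insert j J) c = tadd (tscale (c$j) (g j)) (tcomb g J c)"
  by (simp add: vec_eq_iff tcomb_nth)

lemma tcomb_in_tspan:
  assumes "J \<noteq> {}"
  shows "tcomb g J c \<in> tspan (g ` J)"
  using finite[of J] assms
proof (induction J rule: finite_ne_induct)
  case (singleton j)
  show ?case
    using tspan_tscale[OF tspan_superset[of "g j"]] by (simp add: tcomb_singleton)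
next
  case (insert j J)
  have "tscale (c$j) (g j) \<in> tspan (g ` insert j J)"
    by (intro tspan_tscale tspan_superset) simp
  moreover have "tcomb g J c \<in> tspan (g ` insert j J)"
    using insert tspan_mono[of "g ` J" "g ` insert j J"] by blast
  ultimately show ?case
    using insert by (simp add: tcomb_insert tspan_tadd)
qed

lemma tcomb_tadd: "tcomb g UNIV (tadd c d) = tadd (tcomb g UNIV c) (tcomb g UNIV d)"
  by (simp add: vec_eq_iff tcomb_nth max_add_distrib_left Max_max_image)

lemma tcomb_tscale: "tcomb g UNIV (tscale l c) = tscale l (tcomb g UNIV c)"
  using Max_add_commute[of UNIV "\<lambda>j. c$j + g j $ _" l]
  by (simp add: vec_eq_iff tcomb_nth add_ac)

text \<open>Every element of the span is a combination of all generators, with the residuated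
  coefficients \<open>min\<^sub>k (y\<^sub>k - g j\<^sub>k)\<close>.\<close>

lemma tspan_range_eq: "tspan (range g) = range (tcomb g UNIV)"
proof
  show "range (tcomb g UNIV) \<subseteq> tspan (range g)"
    using tcomb_in_tspan[of UNIV g] by blast
next
  show "tspan (range g) \<subseteq> range (tcomb g UNIV)"
  proof
    fix y assume "y \<in> tspan (range g)"
    then obtain F c0 where F: "finite F" "F \<noteq> {}" "F \<subseteq> range g"
      and y: "y = (\<chi> i. Max ((\<lambda>v. c0 v + v$i) ` F))"
      unfolding tspan_def by blast
    define c where "c = (\<chi> j. Min (range (\<lambda>k. y$k - g j $ k)))"
    have "tcomb g UNIV c $ i = y $ i" for i
    proof (rule antisym)
      have "c$j + g j $ i \<le> y $ i" for j
      proof -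
        have "c$j \<le> y$i - g j $ i" unfolding c_def by (simp add: Min_le)
        then show ?thesis by simp
      qed
      then show "tcomb g UNIV c $ i \<le> y $ i"
        unfolding tcomb_nth by (intro Max.boundedI) auto
      have "Max ((\<lambda>v. c0 v + v$i) ` F) \<in> (\<lambda>v. c0 v + v$i) ` F"
        using F by (intro Max_in) auto
      then obtain v where v: "v \<in> F" "y$i = c0 v + v$i"
        using y by auto
      obtain j where j: "v = g j" using v F by blast
      have "c0 v + v$k \<le> y$k" for k
        using F v by (simp add: y)
      then have "c0 v \<le> c$j"
        unfolding c_def using j by (auto intro!: Min.boundedI simp: algebra_simps)
      then have "y$i \<le> c$j + g j $ i" using v j by simp
      also have "\<dots> \<le> tcomb g UNIV c $ i" by (rule tcomb_ge) simp
      finally show "y $ i \<le> tcomb g UNIV c $ i" .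
    qed
    then show "y \<in> range (tcomb g UNIV)"
      by (metis rangeI vec_eq_iff)
  qed
qed

subsection \<open>Projectivity and minimal generating families\<close>

lemma ft_module_tropical:
  assumes "\<forall>x\<in>Y. \<forall>y\<in>Y. tadd x y \<in> Y" and "\<forall>l. \<forall>x\<in>Y. tscale l x \<in> Y"
  shows "ft_module Y tadd tscale"
  using assms unfolding ft_module_def
  by (simp add: vec_eq_iff max.assoc max.commute max.left_commute add_ac
      max_add_distrib_left max_add_distrib_right)

lemma ft_module_transport:
  assumes "ft_module A add sc" and "inj E"
  shows "ft_module (E ` A) (\<lambda>a b. E (add (inv E a) (inv E b))) (\<lambda>l a. E (sc l (inv E a)))"
  using assms(1) unfolding ft_module_def by (simp add: inv_f_f[OF assms(2)]; metis)

text \<open>Projectivity is tested only against modules with carriers in \<open>real set set\<close>. A vector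
  \<open>x\<close> is encoded there by the two-element sets \<open>{x\<^sub>i, x\<^sub>i + 1 + to_nat i}\<close>: the minimum
  recovers \<open>x\<^sub>i\<close>, the maximum then recovers \<open>i\<close>.\<close>

definition enc :: "real^'n::finite \<Rightarrow> real set set" where
  "enc x = range (\<lambda>i. {x$i, x$i + 1 + real (to_nat i)})"

lemma inj_enc: "inj enc"
proof (rule injI)
  fix x y :: "real^'n"
  assume "enc x = enc y"
  show "x = y"
  proof (subst vec_eq_iff, rule allI)
    fix i
    have "{x$i, x$i + 1 + real (to_nat i)} \<in> enc x"
      unfolding enc_def by blast
    then obtain j where j: "{x$i, x$i + 1 + real (to_nat i)} = {y$j, y$j + 1 + real (to_nat j)}"
      unfolding \<open>enc x = enc y\<close> unfolding enc_def by blast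
    have "x$i = y$j" using arg_cong[OF j, of Min] by simp
    moreover from this have "i = j" using arg_cong[OF j, of Max] by simp
    ultimately show "x$i = y$i" by simp
  qed
qed

lemma ft_projective_lift:
  fixes X :: "(real^'n::finite) set" and Y :: "(real^'i::finite) set"
  assumes "ft_projective X" and "ft_module X tadd tscale" and "ft_module Y tadd tscale"
    and p_hom: "ft_hom Y tadd tscale X tadd tscale p" and p_onto: "p ` Y = X"
  obtains h where "ft_hom X tadd tscale Y tadd tscale h" and "\<And>x. x \<in> X \<Longrightarrow> p (h x) = x"
proof -
  let ?E = "enc :: real^'i \<Rightarrow> real set set" and ?D = "enc :: real^'n \<Rightarrow> real set set"
  define addE where "addE a b = ?E (tadd (inv ?E a) (inv ?E b))" for a b
  define scE where "scE l a = ?E (tscale l (inv ?E a))" for l a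
  define addD where "addD a b = ?D (tadd (inv ?D a) (inv ?D b))" for a b
  define scD where "scD l a = ?D (tscale l (inv ?D a))" for l a
  define \<pi> where "\<pi> a = ?D (p (inv ?E a))" for a
  have module_E: "ft_module (?E ` Y) addE scE"
    unfolding addE_def scE_def using assms(3) inj_enc by (rule ft_module_transport)
  have module_D: "ft_module (?D ` X) addD scD"
    unfolding addD_def scD_def using assms(2) inj_enc by (rule ft_module_transport)
  have surj_\<pi>: "\<pi> ` ?E ` Y = ?D ` X"
    unfolding \<pi>_def p_onto[symmetric] image_image by (simp add: inv_f_f[OF inj_enc])
  have hom_\<pi>: "ft_hom (?E ` Y) addE scE (?D ` X) addD scD \<pi>"
    using p_hom surj_\<pi> unfolding ft_hom_def \<pi>_def addE_def scE_def addD_def scD_def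
    by (simp add: inv_f_f[OF inj_enc] image_subset_iff)
  have hom_D: "ft_hom X tadd tscale (?D ` X) addD scD ?D"
    unfolding ft_hom_def addD_def scD_def by (simp add: inv_f_f[OF inj_enc])
  obtain h where h: "ft_hom X tadd tscale (?E ` Y) addE scE h"
    and h_lift: "\<And>x. x \<in> X \<Longrightarrow> \<pi> (h x) = ?D x"
    using assms(1)[unfolded ft_projective_def projective_over_def, rule_format,
        OF module_E module_D hom_\<pi> surj_\<pi> hom_D]
    by blast
  show thesis
  proof
    show "ft_hom X tadd tscale Y tadd tscale (\<lambda>x. inv ?E (h x))"
      using h unfolding ft_hom_def addE_def scE_def by (auto simp: inv_f_f[OF inj_enc])
    show "p (inv ?E (h x)) = x" if "x \<in> X" for x
      using h_lift[OF that] unfolding \<pi>_def by (rule injD[OF inj_enc])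
  qed
qed

lemma ft_projective_section:
  fixes X :: "(real^'n::finite) set" and g :: "'i::finite \<Rightarrow> real^'n"
  assumes "ft_projective X" and X: "X = tspan (range g)"
  obtains s where "ft_hom X tadd tscale UNIV tadd tscale s"
    and "\<And>x. x \<in> X \<Longrightarrow> tcomb g UNIV (s x) = x"
proof -
  have "ft_module X tadd tscale"
    by (intro ft_module_tropical) (simp_all add: X tspan_tadd tspan_tscale)
  moreover have "ft_module UNIV tadd tscale"
    by (intro ft_module_tropical) simp_all
  moreover have "ft_hom UNIV tadd tscale X tadd tscale (tcomb g UNIV)"
    by (simp add: ft_hom_def X tspan_range_eq tcomb_tadd tcomb_tscale)
  moreover have "range (tcomb g UNIV) = X"
    by (simp add: X tspan_range_eq)
  ultimately show thesis
    using ft_projective_lift[OF assms(1)] that by blast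
qed

lemma minimal_generators:
  fixes X :: "(real^'n) set"
  assumes "tropical_polytope X" and "generator_dimension X = CARD('i::finite)"
  obtains g :: "'i::finite \<Rightarrow> real^'n" where "inj g" and "X = tspan (range g)"
    and "\<And>G. finite G \<Longrightarrow> tspan G = X \<Longrightarrow> CARD('i) \<le> card G"
proof -
  define P where "P k \<longleftrightarrow> (\<exists>G. finite G \<and> card G = k \<and> tspan G = X)" for k
  have dim: "generator_dimension X = Least P"
    unfolding generator_dimension_def P_def ..
  have "\<exists>k. P k"
    using assms(1) unfolding tropical_polytope_def P_def by auto
  then have "P (Least P)"
    by (rule LeastI_ex)
  then obtain G where G: "finite G" "card G = CARD('i)" "tspan G = X"
    using assms(2) unfolding dim P_def by auto
  obtain g :: "'i \<Rightarrow> real^'n" where "bij_betw g UNIV G"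
    using finite_same_card_bij[of "UNIV :: 'i set" G] G by auto
  then have "inj g" "range g = G"
    by (simp_all add: bij_betw_def)
  moreover have "CARD('i) \<le> card G'" if "finite G'" "tspan G' = X" for G'
  proof -
    have "P (card G')" unfolding P_def using that by auto
    then show ?thesis using Least_le[of P] assms(2) dim by simp
  qed
  ultimately show thesis
    using G(3) by (intro that) auto
qed

lemma ft_hom_inv_into:
  assumes hom: "ft_hom A add sc A add sc \<phi>" and bij: "bij_betw \<phi> A A"
    and add_closed: "\<forall>x\<in>A. \<forall>y\<in>A. add x y \<in> A" and sc_closed: "\<forall>l. \<forall>x\<in>A. sc l x \<in> A"
  shows "ft_hom A add sc A add sc (inv_into A \<phi>)"
proof -
  let ?\<psi> = "inv_into A \<phi>"
  have \<psi>_in: "?\<psi> y \<in> A" and \<phi>_\<psi>: "\<phi> (?\<psi> y) = y" if "y \<in> A" for y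
    using that bij by (auto simp: bij_betw_def inv_into_into f_inv_into_f)
  have \<psi>_\<phi>: "?\<psi> (\<phi> x) = x" if "x \<in> A" for x
    using that bij by (simp add: bij_betw_def)
  have "?\<psi> (add y z) = add (?\<psi> y) (?\<psi> z)" if "y \<in> A" "z \<in> A" for y z
    using hom \<psi>_\<phi>[of "add (?\<psi> y) (?\<psi> z)"] that \<psi>_in \<phi>_\<psi> add_closed
    by (simp add: ft_hom_def)
  moreover have "?\<psi> (sc l y) = sc l (?\<psi> y)" if "y \<in> A" for l y
    using hom \<psi>_\<phi>[of "sc l (?\<psi> y)"] that \<psi>_in \<phi>_\<psi> sc_closed
    by (simp add: ft_hom_def)
  ultimately show ?thesis
    using \<psi>_in by (auto simp: ft_hom_def)
qed

subsection \<open>Linear functionals on a minimally generated retract\<close>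

definition ft_functional :: "(real^'n) set \<Rightarrow> (real^'n \<Rightarrow> real) \<Rightarrow> bool" where
  "ft_functional X f \<longleftrightarrow>
     (\<forall>x\<in>X. \<forall>y\<in>X. f (tadd x y) = max (f x) (f y)) \<and> (\<forall>l. \<forall>x\<in>X. f (tscale l x) = l + f x)"

locale minimal_retraction =
  fixes X :: "(real^'n::finite) set" and g :: "'n \<Rightarrow> real^'n" and s :: "real^'n \<Rightarrow> real^'n"
  assumes inj_g: "inj g"
    and X_eq: "X = tspan (range g)"
    and section_hom: "ft_hom X tadd tscale UNIV tadd tscale s"
    and tcomb_section: "\<And>x. x \<in> X \<Longrightarrow> tcomb g UNIV (s x) = x"
    and minimal: "\<And>G. finite G \<Longrightarrow> tspan G = X \<Longrightarrow> CARD('n) \<le> card G"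
begin

lemma section_tadd: "x \<in> X \<Longrightarrow> y \<in> X \<Longrightarrow> s (tadd x y) = tadd (s x) (s y)"
  using section_hom by (simp add: ft_hom_def)

lemma section_tscale: "x \<in> X \<Longrightarrow> s (tscale l x) = tscale l (s x)"
  using section_hom by (simp add: ft_hom_def)

lemma tadd_closed: "x \<in> X \<Longrightarrow> y \<in> X \<Longrightarrow> tadd x y \<in> X"
  by (simp add: X_eq tspan_tadd)

lemma tscale_closed: "x \<in> X \<Longrightarrow> tscale l x \<in> X"
  by (simp add: X_eq tspan_tscale)

lemma tcomb_in: "J \<noteq> {} \<Longrightarrow> tcomb g J c \<in> X"
  using tcomb_in_tspan[of J g c] tspan_mono[of "g ` J" "range g"] X_eq by blast

lemma generator_in: "g j \<in> X"
  by (simp add: X_eq tspan_superset)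

lemma functional_tcomb:
  assumes f: "ft_functional X f" and "J \<noteq> {}"
  shows "f (tcomb g J c) = Max ((\<lambda>j. c$j + f (g j)) ` J)"
  using finite[of J] assms(2)
proof (induction J rule: finite_ne_induct)
  case (singleton j)
  then show ?case
    using f generator_in by (simp add: tcomb_singleton ft_functional_def)
next
  case (insert j J)
  then show ?case
    using f generator_in tcomb_in[OF insert(2)] tscale_closed
    by (simp add: tcomb_insert ft_functional_def)
qed

lemma functional_expansion:
  "ft_functional X f \<Longrightarrow> x \<in> X \<Longrightarrow> f x = Max (range (\<lambda>j. s x $ j + f (g j)))"
  using functional_tcomb[of f UNIV "s x"] tcomb_section by simp

lemma ft_functional_section_coord: "ft_functional X (\<lambda>x. s x $ i)"
  by (simp add: ft_functional_def section_tadd section_tscale)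

lemma section_coord_le: "x \<in> X \<Longrightarrow> s x $ j + g j $ k \<le> x $ k"
  using tcomb_ge[of j UNIV "s x" g k] tcomb_section by simp

definition smat :: "'n \<Rightarrow> 'n \<Rightarrow> real" where
  "smat i j = s (g j) $ i"

lemma smat_le: "smat i j + g i $ k \<le> g j $ k"
  using section_coord_le[OF generator_in] by (simp add: smat_def)

lemma generator_not_redundant: "g j \<notin> tspan (g ` (UNIV - {j}))"
proof
  let ?G = "g ` (UNIV - {j})"
  assume g_j: "g j \<in> tspan ?G"
  then have "UNIV - {j} \<noteq> {}"
    unfolding tspan_def by auto
  have "x \<in> tspan ?G" if "x \<in> X" for x
  proof -
    have "x = tadd (tscale (s x $ j) (g j)) (tcomb g (UNIV - {j}) (s x))"
      using tcomb_section[OF that] tcomb_insert[OF \<open>UNIV - {j} \<noteq> {}\<close>, of g j "s x"]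
      by (simp add: insert_absorb)
    moreover have "tcomb g (UNIV - {j}) (s x) \<in> tspan ?G"
      using \<open>UNIV - {j} \<noteq> {}\<close> by (rule tcomb_in_tspan)
    ultimately show ?thesis
      using g_j by (metis tspan_tadd tspan_tscale)
  qed
  moreover have "tspan ?G \<subseteq> X"
    unfolding X_eq by (rule tspan_mono) auto
  ultimately have "tspan ?G = X" by blast
  then have "CARD('n) \<le> card ?G"
    by (intro minimal) simp
  moreover have "card ?G = CARD('n) - 1"
    using inj_g by (simp add: card_image inj_on_subset card_Diff_singleton)
  moreover have "0 < CARD('n)"
    by simp
  ultimately show False
    by linarith
qed

lemma smat_diag: "smat i i = 0"
proof (rule ccontr)
  assume "smat i i \<noteq> 0"
  then have neg: "smat i i < 0"
    using smat_le[of i i] by fastforce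
  have g_i: "g i = tcomb g UNIV (s (g i))"
    using tcomb_section[OF generator_in] by simp
  show False
  proof (cases "UNIV - {i} = {}")
    case True
    then have "UNIV = {i}" by blast
    then have "g i = tcomb g {i} (s (g i))"
      using g_i by metis
    then have "g i = tscale (smat i i) (g i)"
      by (simp add: tcomb_singleton smat_def)
    then show False
      using neg by (simp add: vec_eq_iff)
  next
    case False
    then have "g i = tadd (tscale (smat i i) (g i)) (tcomb g (UNIV - {i}) (s (g i)))"
      using g_i tcomb_insert[OF False, of g i] by (simp add: insert_absorb smat_def)
    then have "g i = tcomb g (UNIV - {i}) (s (g i))"
      using neg by (auto simp: vec_eq_iff max_def split: if_splits)
    then show False
      using tcomb_in_tspan[OF False] generator_not_redundant by metis
  qed
qed

lemma section_coords_not_translate: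
  assumes "i \<noteq> i'"
  shows "\<not> (\<forall>x\<in>X. s x $ i = d + s x $ i')"
proof
  assume translate: "\<forall>x\<in>X. s x $ i = d + s x $ i'"
  have "smat i i' + smat i' i = 0"
    using translate generator_in[of i] generator_in[of i'] smat_diag[of i] smat_diag[of i']
    by (simp add: smat_def)
  then have "g i' $ k = smat i i' + g i $ k" for k
    using smat_le[of i i' k] smat_le[of i' i k] by linarith
  then have "g i' = tscale (smat i i') (g i)"
    by (simp add: vec_eq_iff)
  moreover have "g i \<in> tspan (g ` (UNIV - {i'}))"
    using assms by (intro tspan_superset) auto
  ultimately show False
    using generator_not_redundant tspan_tscale by metis
qed

text \<open>Some coordinate of \<open>g i\<close> is extremal: there the inequalities \<open>smat_le\<close> are tight
  for all \<open>j\<close>. Otherwise raising the coefficient of \<open>g i\<close> in the combination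
  \<open>y = max\<^sub>j (g j - smat i j)\<close> would not change \<open>y\<close> but would change \<open>s y $ i\<close>.\<close>

lemma tight_coordinate_exists: "\<exists>k. \<forall>j. g j $ k = g i $ k + smat i j"
proof (rule ccontr)
  assume no_tight: "\<not> ?thesis"
  have loose: "\<exists>j. g i $ k < g j $ k - smat i j" for k
  proof -
    obtain j where "g j $ k \<noteq> g i $ k + smat i j"
      using no_tight by blast
    then show ?thesis
      using smat_le[of i j k] by (intro exI[of _ j]) linarith
  qed
  define c :: "real^'n" where "c = (\<chi> j. - smat i j)"
  define y where "y = tcomb g UNIV c"
  have y_in: "y \<in> X"
    unfolding y_def by (simp add: tcomb_in)
  have above: "g i $ k < y $ k" for k
  proof -
    obtain j where "g i $ k < g j $ k - smat i j" using loose by blast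
    also have "\<dots> \<le> y $ k"
      using tcomb_ge[of j UNIV c g k] by (simp add: y_def c_def)
    finally show ?thesis .
  qed
  define \<delta> where "\<delta> = Min (range (\<lambda>k. y $ k - g i $ k))"
  have "\<delta> \<in> range (\<lambda>k. y $ k - g i $ k)"
    unfolding \<delta>_def by (intro Min_in) auto
  then have \<delta>_pos: "0 < \<delta>"
    using above by auto
  have "tadd (tscale \<delta> (g i)) y = y"
  proof -
    have "\<delta> \<le> y $ k - g i $ k" for k
      unfolding \<delta>_def by (simp add: Min_le)
    then have "\<delta> + g i $ k \<le> y $ k" for k
      by (simp add: algebra_simps)
    then show ?thesis
      by (simp add: vec_eq_iff max_def)
  qed
  moreover have "s y $ i = 0"
    using functional_tcomb[OF ft_functional_section_coord, of UNIV c]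
    by (simp add: y_def c_def smat_def)
  moreover have "s (tadd (tscale \<delta> (g i)) y) $ i = max \<delta> (s y $ i)"
    using smat_diag[of i] y_in generator_in[of i]
    by (simp add: section_tadd section_tscale tscale_closed smat_def)
  ultimately show False
    using \<delta>_pos by simp
qed

definition tight :: "'n \<Rightarrow> 'n" where
  "tight i = (SOME k. \<forall>j. g j $ k = g i $ k + smat i j)"

lemma tight_coordinate: "g j $ tight i = g i $ tight i + smat i j"
  using someI_ex[OF tight_coordinate_exists[of i]] unfolding tight_def by blast

lemma coord_tight: "x \<in> X \<Longrightarrow> x $ tight i = g i $ tight i + s x $ i"
proof -
  assume x: "x \<in> X"
  have "x $ tight i = tcomb g UNIV (s x) $ tight i"
    using tcomb_section[OF x] by simp
  also have "\<dots> = Max (range (\<lambda>j. s x $ j + g j $ tight i))"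
    by (rule tcomb_nth)
  also have "\<dots> = Max (range (\<lambda>j. (s x $ j + smat i j) + g i $ tight i))"
    by (subst tight_coordinate) (simp add: add_ac)
  also have "\<dots> = Max (range (\<lambda>j. s x $ j + smat i j)) + g i $ tight i"
    by (rule Max_add_commute) auto
  also have "Max (range (\<lambda>j. s x $ j + smat i j)) = s x $ i"
    using functional_expansion[OF ft_functional_section_coord x, of i] by (simp add: smat_def)
  finally show ?thesis
    by simp
qed

lemma inj_tight: "inj tight"
proof (rule injI, rule ccontr)
  fix i i' assume same: "tight i = tight i'" and "i \<noteq> i'"
  have "s x $ i = (g i' $ tight i' - g i $ tight i) + s x $ i'" if "x \<in> X" for x
    using coord_tight[OF that, of i] coord_tight[OF that, of i'] same by simp
  then show False
    using section_coords_not_translate[OF \<open>i \<noteq> i'\<close>, of "g i' $ tight i' - g i $ tight i"]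
    by blast
qed

lemma surj_tight: "surj tight"
  by (rule finite_UNIV_inj_surj[OF _ inj_tight]) simp

lemma coords_not_translate:
  assumes "a \<noteq> a'"
  shows "\<not> (\<forall>x\<in>X. x $ a = d + x $ a')"
proof
  assume translate: "\<forall>x\<in>X. x $ a = d + x $ a'"
  obtain i where a: "a = tight i"
    using surjD[OF surj_tight, of a] by blast
  obtain i' where a': "a' = tight i'"
    using surjD[OF surj_tight, of a'] by blast
  have "i \<noteq> i'"
    using assms a a' by blast
  moreover have "s x $ i = (d + g i' $ a' - g i $ a) + s x $ i'" if "x \<in> X" for x
    using translate that coord_tight[OF that, of i] coord_tight[OF that, of i'] a a' by simp
  ultimately show False
    using section_coords_not_translate[of i i' "d + g i' $ a' - g i $ a"] by blast
qed

text \<open>The coordinate functional at a tight coordinate is join-irreducible among the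
  functionals on \<open>X\<close>.\<close>

lemma functional_eq_tight_coord:
  assumes h: "ft_functional X h" and below: "\<forall>y\<in>X. h y \<le> y $ tight i"
    and at_generator: "h (g i) = g i $ tight i" and y: "y \<in> X"
  shows "h y = y $ tight i"
proof (rule antisym)
  show "h y \<le> y $ tight i"
    using below y by blast
  have "s y $ i + h (g i) \<le> Max (range (\<lambda>j. s y $ j + h (g j)))"
    by (rule Max_ge) auto
  also have "\<dots> = h y"
    using functional_expansion[OF h y] by simp
  finally show "y $ tight i \<le> h y"
    using coord_tight[OF y, of i] at_generator by simp
qed

subsection \<open>Automorphisms\<close>

lemma tight_coord_single_term:
  assumes \<psi>_hom: "ft_hom X tadd tscale X tadd tscale \<psi>"
    and expand: "\<And>y. y \<in> X \<Longrightarrow> y $ tight i = Max (range (\<lambda>j. s (\<psi> y) $ j + r j))"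
  obtains j0 where "\<And>y. y \<in> X \<Longrightarrow> y $ tight i = s (\<psi> y) $ j0 + r j0"
proof -
  have \<psi>_in: "\<psi> y \<in> X" if "y \<in> X" for y
    using \<psi>_hom that by (auto simp: ft_hom_def)
  have "Max (range (\<lambda>j. s (\<psi> (g i)) $ j + r j)) \<in> range (\<lambda>j. s (\<psi> (g i)) $ j + r j)"
    by (intro Max_in) auto
  then obtain j0 where "Max (range (\<lambda>j. s (\<psi> (g i)) $ j + r j)) = s (\<psi> (g i)) $ j0 + r j0"
    by blast
  then have j0: "g i $ tight i = s (\<psi> (g i)) $ j0 + r j0"
    using expand[OF generator_in[of i]] by simp
  define h where "h y = s (\<psi> y) $ j0 + r j0" for y
  have h: "ft_functional X h"
    using \<psi>_hom \<psi>_in unfolding ft_functional_def h_def ft_hom_def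
    by (simp add: section_tadd section_tscale max_add_distrib_left max_add_distrib_right add_ac)
  have below: "\<forall>y\<in>X. h y \<le> y $ tight i"
  proof
    fix y assume "y \<in> X"
    show "h y \<le> y $ tight i"
      unfolding h_def expand[OF \<open>y \<in> X\<close>] by (rule Max_ge) auto
  qed
  have at_generator: "h (g i) = g i $ tight i"
    using j0 by (simp add: h_def)
  show thesis
  proof (rule that)
    fix y assume "y \<in> X"
    with functional_eq_tight_coord[OF h below at_generator]
    show "y $ tight i = s (\<psi> y) $ j0 + r j0"
      by (simp add: h_def)
  qed
qed

lemma automorphism_coordinate:
  assumes "ft_automorphism X \<phi>"
  shows "\<exists>b \<mu>. \<forall>x\<in>X. \<phi> x $ a = \<mu> + x $ b"
proof -
  obtain i where a: "a = tight i"
    using surjD[OF surj_tight, of a] by blast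
  have hom: "ft_hom X tadd tscale X tadd tscale \<phi>" and bij: "bij_betw \<phi> X X"
    using assms by (simp_all add: ft_automorphism_def)
  define \<psi> where "\<psi> = inv_into X \<phi>"
  have \<psi>_hom: "ft_hom X tadd tscale X tadd tscale \<psi>"
    unfolding \<psi>_def using hom bij tadd_closed tscale_closed by (intro ft_hom_inv_into) auto
  have \<psi>_in: "\<psi> y \<in> X" and \<phi>_\<psi>: "\<phi> (\<psi> y) = y" if "y \<in> X" for y
    using \<psi>_hom bij that unfolding \<psi>_def by (auto simp: ft_hom_def bij_betw_inv_into_right)
  have \<psi>_\<phi>: "\<psi> (\<phi> x) = x" if "x \<in> X" for x
    using bij that unfolding \<psi>_def by (rule bij_betw_inv_into_left)
  define r where "r j = \<phi> (g j) $ a" for j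
  have coord_a: "ft_functional X (\<lambda>x. \<phi> x $ a)"
    using hom by (simp add: ft_functional_def ft_hom_def)
  have "y $ tight i = Max (range (\<lambda>j. s (\<psi> y) $ j + r j))" if "y \<in> X" for y
    using functional_expansion[OF coord_a \<psi>_in[OF that]] \<phi>_\<psi>[OF that] by (simp add: a r_def)
  then obtain j0 where j0: "\<And>y. y \<in> X \<Longrightarrow> y $ tight i = s (\<psi> y) $ j0 + r j0"
    using tight_coord_single_term[OF \<psi>_hom] by blast
  have "\<phi> x $ a = (r j0 - g j0 $ tight j0) + x $ tight j0" if x: "x \<in> X" for x
    using j0[OF bij_betw_apply[OF bij x]] \<psi>_\<phi>[OF x] coord_tight[OF x, of j0] by (simp add: a)
  then show ?thesis
    by (intro exI[of _ "tight j0"] exI[of _ "r j0 - g j0 $ tight j0"]) blast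
qed

lemma automorphism_permutes_coordinates:
  assumes "ft_automorphism X \<phi>"
  obtains \<tau> \<mu> where "bij \<tau>" and "\<And>x a. x \<in> X \<Longrightarrow> \<phi> x $ a = \<mu> a + x $ \<tau> a"
proof -
  have "\<forall>a. \<exists>b \<mu>. \<forall>x\<in>X. \<phi> x $ a = \<mu> + x $ b"
    using automorphism_coordinate[OF assms] by blast
  then have "\<exists>\<tau>. \<forall>a. \<exists>\<mu>. \<forall>x\<in>X. \<phi> x $ a = \<mu> + x $ \<tau> a"
    by (rule choice)
  then obtain \<tau> where "\<forall>a. \<exists>\<mu>. \<forall>x\<in>X. \<phi> x $ a = \<mu> + x $ \<tau> a" ..
  then have "\<exists>\<mu>. \<forall>a. \<forall>x\<in>X. \<phi> x $ a = \<mu> a + x $ \<tau> a"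
    by (rule choice)
  then obtain \<mu> where "\<forall>a. \<forall>x\<in>X. \<phi> x $ a = \<mu> a + x $ \<tau> a" ..
  then have \<tau>\<mu>: "\<And>x a. x \<in> X \<Longrightarrow> \<phi> x $ a = \<mu> a + x $ \<tau> a"
    by blast
  have onto: "\<phi> ` X = X"
    using assms by (simp add: ft_automorphism_def bij_betw_def)
  have "inj \<tau>"
  proof (rule injI, rule ccontr)
    fix a a' assume same: "\<tau> a = \<tau> a'" and "a \<noteq> a'"
    have "y $ a = (\<mu> a - \<mu> a') + y $ a'" if "y \<in> X" for y
    proof -
      have "y \<in> \<phi> ` X"
        using that onto by simp
      then obtain x where "x \<in> X" "y = \<phi> x" ..
      then show ?thesis
        using same by (simp add: \<tau>\<mu>)
    qed
    then show False
      using coords_not_translate[OF \<open>a \<noteq> a'\<close>, of "\<mu> a - \<mu> a'"] by blast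
  qed
  then have "bij \<tau>"
    by (simp add: bij_def finite_UNIV_inj_surj)
  then show thesis
    using \<tau>\<mu> by (rule that)
qed

end

lemma ft_automorphism_permute_translate:
  fixes \<mu> :: "'n::finite \<Rightarrow> real"
  assumes "bij \<tau>"
  shows "ft_automorphism UNIV (\<lambda>y. \<chi> a. \<mu> a + y $ \<tau> a)"
proof -
  let ?T = "\<lambda>y :: real^'n. \<chi> a. \<mu> a + y $ \<tau> a"
  let ?T' = "\<lambda>z :: real^'n. \<chi> b. z $ inv \<tau> b - \<mu> (inv \<tau> b)"
  have "?T' \<circ> ?T = id" "?T \<circ> ?T' = id"
    using assms by (simp_all add: fun_eq_iff vec_eq_iff bij_is_inj bij_is_surj surj_f_inv_f)
  then have "bij ?T"
    by (rule o_bij)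
  moreover have "ft_hom UNIV tadd tscale UNIV tadd tscale ?T"
    by (simp add: ft_hom_def vec_eq_iff max_add_distrib_right add_ac)
  ultimately show ?thesis
    by (simp add: ft_automorphism_def)
qed

lemma permutation_matrix_mult:
  fixes y :: "real^'n" and \<tau> :: "'n \<Rightarrow> 'n"
  shows "(\<chi> a b. if b = \<tau> a then 1 else 0) *v y = (\<chi> a. y $ \<tau> a)"
  by (simp add: vec_eq_iff matrix_vector_mult_def mult_if_delta)

theorem theorem7p4:
  fixes X :: "(real^'n) set" and \<phi> :: "real^'n \<Rightarrow> real^'n"
  assumes "projective_polytope X"
    and "ft_automorphism X \<phi>"
  shows "(\<exists>\<psi>. ft_automorphism UNIV \<psi> \<and> (\<forall>x\<in>X. \<psi> x = \<phi> x))
       \<and> (\<exists>(A :: real^'n^'n) (b :: real^'n). \<forall>x\<in>X. \<phi> x = A *v x + b)"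
proof -
  have polytope: "tropical_polytope X" and projective: "ft_projective X"
    and dim: "generator_dimension X = CARD('n)"
    using assms(1) unfolding projective_polytope_def by auto
  obtain g :: "'n \<Rightarrow> real^'n" where "inj g" and X: "X = tspan (range g)"
    and "\<And>G. finite G \<Longrightarrow> tspan G = X \<Longrightarrow> CARD('n) \<le> card G"
    using minimal_generators[OF polytope dim] by blast
  moreover obtain s where "ft_hom X tadd tscale UNIV tadd tscale s"
    and "\<And>x. x \<in> X \<Longrightarrow> tcomb g UNIV (s x) = x"
    using ft_projective_section[OF projective X] by blast
  ultimately interpret minimal_retraction X g s
    by unfold_locales
  obtain \<tau> \<mu> where "bij \<tau>" and \<phi>: "\<And>x a. x \<in> X \<Longrightarrow> \<phi> x $ a = \<mu> a + x $ \<tau> a"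
    using automorphism_permutes_coordinates[OF assms(2)] by blast
  have "ft_automorphism UNIV (\<lambda>y. \<chi> a. \<mu> a + y $ \<tau> a) \<and> (\<forall>x\<in>X. (\<chi> a. \<mu> a + x $ \<tau> a) = \<phi> x)"
    using ft_automorphism_permute_translate[OF \<open>bij \<tau>\<close>] by (simp add: vec_eq_iff \<phi>)
  moreover have "\<forall>x\<in>X. \<phi> x = (\<chi> a b. if b = \<tau> a then 1 else 0) *v x + (\<chi> a. \<mu> a)"
    by (simp add: vec_eq_iff permutation_matrix_mult \<phi> add.commute)
  ultimately show ?thesis
    by blast
qed

end
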